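(* Assume in addition $\eta^{i,l}_n=0$ almost surely for all $n,i,l$. Let $m_0$ be a positive integer with the covering property and $p_{m_0}:=\mathbb E[\mathcal G_{[0,m_0)}]$ (which is positive). For $k\ge1$ define the random variable $\Lambda_0(m_0,k):=\gamma(1-\gamma)^{m_0-1}\frac1k\sum_{s=1}^k\mathcal G_{[(s-1)m_0,sm_0)}$ (and $\Lambda_0(m_0,0):=0$). Then for every $k\ge0$, every $n\in[km_0,(k+1)m_0)$ and every $l\in\{1,\dots,d\}$, almost surely $$\mathcal D(\mathfrak x^l_n)\le \mathcal D(\mathfrak x^l_0)\,e^{-\Lambda_0(m_0,k)k},\qquad \max_{i,j}\|\mathbf x^i_n-\mathbf x^j_n\|_\infty\le\max_{i,j}\|\mathbf x^i_0-\mathbf x^j_0\|_\infty\,e^{-\Lambda_0(m_0,k)k},$$ and $\lim_{k\to\infty}\Lambda_0(m_0,k)=p_{m_0}\gamma(1-\gamma)^{m_0-1}$ almost surely.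
   Context: Setting (random batch CBO). Fix integers $N\ge2$, $d\ge1$, batch size $P\ge2$, drift $\gamma\in(0,1)$ and noise level $\zeta\ge0$; $\mathcal N=\{1,\dots,N\}$, $\mathbf e_1,\dots,\mathbf e_d$ the standard basis of $\mathbb R^d$. For each nonempty $S\subseteq\mathcal N$ and $j\in\mathcal N$ let $\omega_{S,j}:(\mathbb R^d)^N\to[0,\infty)$ satisfy $\sum_{j\in S}\omega_{S,j}(X)=1$ and $\omega_{S,j}(X)=0$ for $j\notin S$. Let $\mathcal A$ be the finite set of partitions of $\mathcal N$ into $\lceil N/P\rceil$ batches, all of size exactly $P$ except possibly one of size at most $P$. Let $(\mathcal B^n)_{n\ge0}$ be i.i.d. uniform on $\mathcal A$, and $[i]_n$ the batch of $\mathcal B^n$ containing $i$. Let $(\eta^{i,l}_n)_{i\in\mathcal N,1\le l\le d}$, $n\ge0$, be random arrays, i.i.d. in $n$, with $\mathbb E\eta^{i,l}_n=0$ and $\mathbb E|\eta^{i,l}_n|^2\le\zeta^2$. The initial data $X_0=(\mathbf x^1_0,\dots,\mathbf x^N_0)\in(\mathbb R^d)^N$ (deterministic or random), the batch sequence and the noise sequence are mutually independent. The process evolves by $$\mathbf x^i_{n+1}=\mathbf x^i_n-\gamma(\mathbf x^i_n-\bar{\mathbf x}^{[i]_n,*}_n)-\sum_{l=1}^d(x^{i,l}_n-\bar x^{[i]_n,*,l}_n)\eta^{i,l}_n\mathbf e_l,\qquad \bar{\mathbf x}^{S,*}_n:=\sum_{j=1}^N\omega_{S,j}(X_n)\mathbf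 x^j_n,$$ where $X_n=(\mathbf x^1_n,\dots,\mathbf x^N_n)$, $x^{i,l}_n$ is the $l$-th component of $\mathbf x^i_n$ and $\bar x^{S,*,l}_n$ that of $\bar{\mathbf x}^{S,*}_n$. Let $\mathfrak x^l_n:=(x^{1,l}_n,\dots,x^{N,l}_n)^\top$ and, for $\mathbf z\in\mathbb R^N$, $\mathcal D(\mathbf z):=\max_iz_i-\min_iz_i$. For $n\ge0,m\ge1$, $\mathcal G_{[n,n+m)}:=\min_{i,j}|\{r:n\le r<n+m,[i]_r=[j]_r\}|$. A positive integer $m_0$ has the covering property if there exist partitions $\mathcal P^1,\dots,\mathcal P^{m_0}\in\mathcal A$ such that every pair $i,j\in\mathcal N$ lies in a common block of some $\mathcal P^k$. *)

theory Defs
  imports "HOL-Probability.Probability"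
begin

text \<open>Particles are indexed by a finite type 'n (N = CARD('n)), coordinates by a
finite type 'd (d = CARD('d)).  A configuration is a map 'n \<Rightarrow> real^'d.\<close>

type_synonym ('n, 'd) config = "'n \<Rightarrow> real^'d"

definition batch_partitions :: "nat \<Rightarrow> ('n::finite) set set set" where
  "batch_partitions P = {Q. partition_on (UNIV :: 'n set) Q
        \<and> card Q = nat \<lceil>real CARD('n) / real P\<rceil>
        \<and> (\<forall>S\<in>Q. card S \<le> P)
        \<and> card {S\<in>Q. card S \<noteq> P} \<le> 1}"

definition batch_of :: "'n set set \<Rightarrow> 'n \<Rightarrow> 'n set" where
  "batch_of Q i = (THE S. S \<in> Q \<and> i \<in> S)"

definition wmean :: "('n set \<Rightarrow> 'n \<Rightarrow> ('n::finite, 'd) config \<Rightarrow> real)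
     \<Rightarrow> 'n set \<Rightarrow> ('n, 'd) config \<Rightarrow> real^'d" where
  "wmean w S X = (\<Sum>j\<in>UNIV. w S j X *\<^sub>R X j)"

definition cbo_step :: "('n set \<Rightarrow> 'n \<Rightarrow> ('n::finite, 'd::finite) config \<Rightarrow> real) \<Rightarrow> real
     \<Rightarrow> 'n set set \<Rightarrow> ('n \<Rightarrow> 'd \<Rightarrow> real) \<Rightarrow> ('n, 'd) config \<Rightarrow> ('n, 'd) config" where
  "cbo_step w \<gamma> Q eta X = (\<lambda>i.
      X i - \<gamma> *\<^sub>R (X i - wmean w (batch_of Q i) X)
          - (\<chi> l. (X i $ l - wmean w (batch_of Q i) X $ l) * eta i l))"

primrec cbo_traj :: "('n set \<Rightarrow> 'n \<Rightarrow> ('n::finite, 'd::finite) config \<Rightarrow> real) \<Rightarrow> real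
     \<Rightarrow> (nat \<Rightarrow> 'n set set) \<Rightarrow> (nat \<Rightarrow> 'n \<Rightarrow> 'd \<Rightarrow> real) \<Rightarrow> ('n, 'd) config
     \<Rightarrow> nat \<Rightarrow> ('n, 'd) config" where
  "cbo_traj w \<gamma> Bs etas X0 0 = X0"
| "cbo_traj w \<gamma> Bs etas X0 (Suc n) = cbo_step w \<gamma> (Bs n) (etas n) (cbo_traj w \<gamma> Bs etas X0 n)"

definition diamD :: "('n::finite, 'd::finite) config \<Rightarrow> 'd \<Rightarrow> real" where
  "diamD X l = (MAX i. X i $ l) - (MIN i. X i $ l)"

definition diam_inf :: "('n::finite, 'd::finite) config \<Rightarrow> real" where
  "diam_inf X = (MAX ij \<in> (UNIV :: ('n \<times> 'n) set). infnorm (X (fst ij) - X (snd ij)))"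

definition Gcount :: "(nat \<Rightarrow> ('n::finite) set set) \<Rightarrow> nat \<Rightarrow> nat \<Rightarrow> nat" where
  "Gcount Bs n m = (MIN ij \<in> (UNIV :: ('n \<times> 'n) set).
      card {r. n \<le> r \<and> r < n + m \<and> batch_of (Bs r) (fst ij) = batch_of (Bs r) (snd ij)})"

definition covering :: "nat \<Rightarrow> nat \<Rightarrow> 'n::finite itself \<Rightarrow> bool" where
  "covering P m0 _ = (\<exists>Ps :: nat \<Rightarrow> 'n set set. (\<forall>k\<in>{1..m0}. Ps k \<in> batch_partitions P)
      \<and> (\<forall>i j. \<exists>k\<in>{1..m0}. \<exists>S\<in>Ps k. i \<in> S \<and> j \<in> S))"

definition Lambda0 :: "real \<Rightarrow> (nat \<Rightarrow> ('n::finite) set set) \<Rightarrow> nat \<Rightarrow> nat \<Rightarrow> real" where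
  "Lambda0 \<gamma> Bs m0 k = (if k = 0 then 0 else
      \<gamma> * (1 - \<gamma>) ^ (m0 - 1) * (1 / real k) *
        (\<Sum>s=1..k. real (Gcount Bs ((s - 1) * m0) m0)))"

end

theory Submission
  imports Defs
begin

(* With the noise switched off, every coordinate evolves by
   y_{t+1}(i) = (1 - gamma) y_t(i) + gamma sum_j omega_t(i,j) y_t(j)
   with stochastic weight rows omega_t(i,-), and two particles in a common batch share their row.
   Tracking how much of the initial excess over the minimum (and deficit below the maximum)
   is passed on shows that a window of m steps in which i and j meet c times shrinks their
   distance to at most (1 - c gamma (1 - gamma)^(m-1)) times the initial spread. As the spread
   never grows and 1 - x <= exp(-x), chaining windows of length m0 gives the exponential bounds.
   The meeting counts of disjoint windows are independent, bounded by m0 and share a mean that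
   the covering property makes positive; the strong law of large numbers, obtained from
   Hoeffding's inequality and Borel-Cantelli, then gives the limit of Lambda0. *)

section \<open>Averaging dynamics\<close>

locale averaging_dynamics =
  fixes y :: "nat \<Rightarrow> 'n::finite \<Rightarrow> real" and \<omega> :: "nat \<Rightarrow> 'n \<Rightarrow> 'n \<Rightarrow> real" and \<gamma> :: real
  assumes gamma_pos: "0 < \<gamma>" and gamma_less_1: "\<gamma> < 1"
    and weight_nonneg: "\<And>t i j. 0 \<le> \<omega> t i j"
    and weight_sum: "\<And>t i. (\<Sum>j\<in>UNIV. \<omega> t i j) = 1"
    and step: "\<And>t i. y (Suc t) i = (1 - \<gamma>) * y t i + \<gamma> * (\<Sum>j\<in>UNIV. \<omega> t i j * y t j)"
begin

lemma step_centered: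
  "y (Suc t) i - c = (1 - \<gamma>) * (y t i - c) + \<gamma> * (\<Sum>j\<in>UNIV. \<omega> t i j * (y t j - c))"
proof -
  have "(\<Sum>j\<in>UNIV. \<omega> t i j * (y t j - c))
      = (\<Sum>j\<in>UNIV. \<omega> t i j * y t j) - c * (\<Sum>j\<in>UNIV. \<omega> t i j)"
    by (simp add: algebra_simps sum_subtractf sum_distrib_left)
  then have centered_mean: "(\<Sum>j\<in>UNIV. \<omega> t i j * (y t j - c)) = (\<Sum>j\<in>UNIV. \<omega> t i j * y t j) - c"
    using weight_sum[of t i] by simp
  show ?thesis
    unfolding centered_mean using step[of t i] by (simp add: algebra_simps)
qed

lemma averaging_dynamics_uminus: "averaging_dynamics (\<lambda>t i. - y t i) \<omega> \<gamma>"
proof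
  show "- y (Suc t) i = (1 - \<gamma>) * - y t i + \<gamma> * (\<Sum>j\<in>UNIV. \<omega> t i j * - y t j)" for t i
    using step[of t i] by (simp add: sum_negf)
qed (use gamma_pos gamma_less_1 weight_nonneg weight_sum in auto)

definition inflow :: "real \<Rightarrow> nat \<Rightarrow> 'n \<Rightarrow> real" where
  "inflow lo r i = (\<Sum>j\<in>UNIV. \<omega> r i j * (y 0 j - lo))"

context
  fixes lo :: real
  assumes lower_bound: "\<And>i. lo \<le> y 0 i"
begin

lemma lower_bound_invariant: "lo \<le> y t i"
proof (induction t arbitrary: i)
  case (Suc t)
  have "0 \<le> (1 - \<gamma>) * (y t i - lo) + \<gamma> * (\<Sum>j\<in>UNIV. \<omega> t i j * (y t j - lo))"
    using Suc gamma_pos gamma_less_1 weight_nonneg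
    by (intro add_nonneg_nonneg mult_nonneg_nonneg sum_nonneg) auto
  then show ?case
    using step_centered[of t i lo] by simp
qed (use lower_bound in simp)

lemma excess_geometric_lower_bound: "(1 - \<gamma>) ^ t * (y 0 i - lo) \<le> y t i - lo"
proof (induction t arbitrary: i)
  case (Suc t)
  have "0 \<le> \<gamma> * (\<Sum>j\<in>UNIV. \<omega> t i j * (y t j - lo))"
    using lower_bound_invariant gamma_pos weight_nonneg by (intro mult_nonneg_nonneg sum_nonneg) auto
  moreover have "(1 - \<gamma>) * ((1 - \<gamma>) ^ t * (y 0 i - lo)) \<le> (1 - \<gamma>) * (y t i - lo)"
    using Suc gamma_less_1 by (intro mult_left_mono) auto
  ultimately show ?case
    using step_centered[of t i lo] by (simp add: algebra_simps)
qed simp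

lemma excess_ge_inflow: "\<gamma> * (1 - \<gamma>) ^ (t - 1) * (\<Sum>r<t. inflow lo r i) \<le> y t i - lo"
proof (induction t arbitrary: i)
  case (Suc t)
  have damped: "(1 - \<gamma>) * (\<gamma> * (1 - \<gamma>) ^ (t - 1) * (\<Sum>r<t. inflow lo r i))
      \<le> (1 - \<gamma>) * (y t i - lo)"
    using Suc gamma_less_1 by (intro mult_left_mono) auto
  have "(1 - \<gamma>) ^ t * inflow lo t i = (\<Sum>j\<in>UNIV. \<omega> t i j * ((1 - \<gamma>) ^ t * (y 0 j - lo)))"
    unfolding inflow_def by (simp add: sum_distrib_left algebra_simps)
  also have "\<dots> \<le> (\<Sum>j\<in>UNIV. \<omega> t i j * (y t j - lo))"
    using excess_geometric_lower_bound weight_nonneg by (intro sum_mono mult_left_mono) auto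
  finally have fresh: "\<gamma> * (1 - \<gamma>) ^ t * inflow lo t i \<le> \<gamma> * (\<Sum>j\<in>UNIV. \<omega> t i j * (y t j - lo))"
    using gamma_pos by (simp add: mult.assoc mult_left_mono)
  have "\<gamma> * (1 - \<gamma>) ^ (Suc t - 1) * (\<Sum>r<Suc t. inflow lo r i)
      = (1 - \<gamma>) * (\<gamma> * (1 - \<gamma>) ^ (t - 1) * (\<Sum>r<t. inflow lo r i)) + \<gamma> * (1 - \<gamma>) ^ t * inflow lo t i"
    by (cases t) (simp_all add: algebra_simps)
  also have "\<dots> \<le> y (Suc t) i - lo"
    using damped fresh step_centered[of t i lo] by linarith
  finally show ?case .
qed (use lower_bound in simp)

end

text \<open>Applied to i and to j for the reflected dynamics, every step at which i and j carry the
  same weights contributes an inflow of exactly hi - lo to the two bounds together.\<close>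
lemma spread_contraction:
  assumes lo: "\<And>k. lo \<le> y 0 k" and hi: "\<And>k. y 0 k \<le> hi"
  shows "y m j - y m i \<le> (hi - lo) * (1 - \<gamma> * (1 - \<gamma>) ^ (m - 1) * card {r. r < m \<and> \<omega> r i = \<omega> r j})"
proof -
  interpret reflected: averaging_dynamics "\<lambda>t i. - y t i" \<omega> \<gamma>
    by (rule averaging_dynamics_uminus)
  let ?c = "\<gamma> * (1 - \<gamma>) ^ (m - 1)" and ?R = "{r. r < m \<and> \<omega> r i = \<omega> r j}"
  define U where "U r = inflow lo r i + reflected.inflow (- hi) r j" for r
  have U_nonneg: "0 \<le> U r" for r
    unfolding U_def inflow_def reflected.inflow_def using lo hi weight_nonneg
    by (intro add_nonneg_nonneg sum_nonneg mult_nonneg_nonneg) auto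
  have U_same: "U r = hi - lo" if "r \<in> ?R" for r
  proof -
    have "U r = (\<Sum>k\<in>UNIV. \<omega> r j k * (hi - lo))"
      using that unfolding U_def inflow_def reflected.inflow_def
      by (simp add: sum.distrib[symmetric] algebra_simps)
    then show ?thesis
      using weight_sum[of r j] by (simp add: sum_distrib_right[symmetric])
  qed
  have "card ?R * (hi - lo) = (\<Sum>r\<in>?R. U r)"
    using U_same by simp
  also have "\<dots> \<le> (\<Sum>r<m. U r)"
    using U_nonneg by (intro sum_mono2) auto
  finally have "?c * (card ?R * (hi - lo)) \<le> ?c * (\<Sum>r<m. U r)"
    using gamma_pos gamma_less_1 by (intro mult_left_mono) auto
  also have "\<dots> = ?c * (\<Sum>r<m. inflow lo r i) + ?c * (\<Sum>r<m. reflected.inflow (- hi) r j)"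
    by (simp add: U_def sum.distrib algebra_simps)
  also have "\<dots> \<le> (y m i - lo) + (hi - y m j)"
    using excess_ge_inflow[OF lo, of m i] reflected.excess_ge_inflow[of "- hi" m j] hi
    by (intro add_mono) auto
  finally show ?thesis
    by (simp add: algebra_simps)
qed

end

section \<open>Diameters and batch meetings\<close>

lemma diamD_attained:
  fixes Y :: "('n::finite, 'd::finite) config"
  obtains i j where "Y i $ l = (MIN k. Y k $ l)" and "Y j $ l = (MAX k. Y k $ l)"
proof -
  have "(MIN k. Y k $ l) \<in> range (\<lambda>k. Y k $ l)"
    by (rule Min_in) simp_all
  then obtain i where "Y i $ l = (MIN k. Y k $ l)"
    by (metis (no_types, lifting) rangeE)
  moreover have "(MAX k. Y k $ l) \<in> range (\<lambda>k. Y k $ l)"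
    by (rule Max_in) simp_all
  then obtain j where "Y j $ l = (MAX k. Y k $ l)"
    by (metis (no_types, lifting) rangeE)
  ultimately show ?thesis
    by (rule that)
qed

lemma abs_diff_le_diamD:
  fixes Y :: "('n::finite, 'd::finite) config"
  shows "\<bar>Y i $ l - Y j $ l\<bar> \<le> diamD Y l"
proof -
  have bounds: "(MIN k. Y k $ l) \<le> Y k $ l" "Y k $ l \<le> (MAX k. Y k $ l)" for k
    by simp_all
  show ?thesis
    unfolding diamD_def abs_le_iff using bounds[of i] bounds[of j] by (intro conjI) linarith+
qed

lemma diamD_nonneg: "0 \<le> diamD (Y :: ('n::finite, 'd::finite) config) l"
  by (rule order_trans[OF abs_ge_zero abs_diff_le_diamD])

lemma diam_inf_eq_Max_diamD:
  fixes Y :: "('n::finite, 'd::finite) config"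
  shows "diam_inf Y = (MAX l. diamD Y l)"
proof (rule antisym)
  show "diam_inf Y \<le> (MAX l. diamD Y l)"
    unfolding diam_inf_def
  proof (rule Max.boundedI)
    fix v assume "v \<in> (\<lambda>ij. infnorm (Y (fst ij) - Y (snd ij))) ` UNIV"
    then obtain i j where v: "v = infnorm (Y i - Y j)"
      by auto
    show "v \<le> (MAX l. diamD Y l)"
      unfolding v infnorm_cart
    proof (rule cSup_least)
      fix x assume "x \<in> {\<bar>(Y i - Y j) $ l\<bar> |l. l \<in> UNIV}"
      then obtain l where "x = \<bar>Y i $ l - Y j $ l\<bar>"
        by auto
      moreover have "diamD Y l \<le> (MAX l. diamD Y l)"
        by (rule Max_ge) auto
      ultimately show "x \<le> (MAX l. diamD Y l)"
        using abs_diff_le_diamD[of Y i l j] by linarith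
    qed auto
  qed auto
  show "(MAX l. diamD Y l) \<le> diam_inf Y"
  proof (rule Max.boundedI)
    fix v assume "v \<in> range (diamD Y)"
    then obtain l where v: "v = diamD Y l"
      by auto
    obtain i j where "Y i $ l = (MIN k. Y k $ l)" "Y j $ l = (MAX k. Y k $ l)"
      by (rule diamD_attained)
    then have "v \<le> \<bar>(Y j - Y i) $ l\<bar>"
      unfolding v diamD_def by simp
    also have "\<dots> \<le> infnorm (Y j - Y i)"
      by (rule component_le_infnorm_cart)
    also have "\<dots> \<le> diam_inf Y"
      unfolding diam_inf_def by (rule Max_ge) (auto intro!: image_eqI[of _ _ "(j, i)"])
    finally show "v \<le> diam_inf Y" .
  qed auto
qed

lemma diam_inf_le_mult:
  fixes Y Z :: "('n::finite, 'd::finite) config"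
  assumes "\<And>l. diamD Y l \<le> diamD Z l * E" and "0 \<le> E"
  shows "diam_inf Y \<le> diam_inf Z * E"
  unfolding diam_inf_eq_Max_diamD
proof (rule Max.boundedI)
  fix v assume "v \<in> range (diamD Y)"
  then obtain l where "v = diamD Y l"
    by auto
  also have "\<dots> \<le> diamD Z l * E"
    by (rule assms(1))
  also have "\<dots> \<le> (MAX l. diamD Z l) * E"
    using assms(2) by (intro mult_right_mono) simp_all
  finally show "v \<le> (MAX l. diamD Z l) * E" .
qed auto

lemma batch_of_eqI:
  assumes "partition_on UNIV Q" and "S \<in> Q" and "i \<in> S"
  shows "batch_of Q i = S"
  unfolding batch_of_def
proof (rule the_equality)
  fix S' assume "S' \<in> Q \<and> i \<in> S'"
  then show "S' = S"
    using assms partition_onD2[OF assms(1)] by (meson disjnt_iff pairwiseD)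
qed (use assms in simp)

lemma mem_batch_of:
  assumes "partition_on UNIV Q"
  shows "i \<in> batch_of Q i"
proof -
  obtain S where "S \<in> Q" "i \<in> S"
    using partition_onD1[OF assms] by blast
  then show ?thesis
    using batch_of_eqI[OF assms] by simp
qed

lemma partition_on_batch_partitions: "Q \<in> batch_partitions P \<Longrightarrow> partition_on UNIV Q"
  by (simp add: batch_partitions_def)

lemma Gcount_shift: "Gcount f a m = Gcount (\<lambda>r. f (a + r)) 0 m"
proof -
  have shift: "card {r. a \<le> r \<and> r < a + m \<and> p r} = card {r. 0 \<le> r \<and> r < 0 + m \<and> p (a + r)}"
    for p :: "nat \<Rightarrow> bool"
  proof -
    have "{r. a \<le> r \<and> r < a + m \<and> p r} = (+) a ` {r. 0 \<le> r \<and> r < 0 + m \<and> p (a + r)}"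
      by (auto simp: image_iff elim!: le_Suc_ex[elim_format])
    then show ?thesis
      by (simp add: card_image)
  qed
  show ?thesis
    unfolding Gcount_def by (intro arg_cong[where f = Min] image_cong refl shift)
qed

lemma Gcount_cong: "(\<And>r. r < m \<Longrightarrow> f r = g r) \<Longrightarrow> Gcount f 0 m = Gcount g 0 m"
  unfolding Gcount_def by (intro arg_cong[where f = Min] image_cong refl arg_cong[where f = card]) auto

lemma Gcount_le_card: "Gcount f 0 m \<le> card {r. r < m \<and> batch_of (f r) i = batch_of (f r) j}"
  unfolding Gcount_def by (rule Min_le) (auto intro!: image_eqI[of _ _ "(i, j)"])

lemma Gcount_le: "Gcount f a m \<le> m"
proof -
  have "Gcount f a m \<le> card {r. r < m \<and> batch_of (f (a + r)) i = batch_of (f (a + r)) i}"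
    unfolding Gcount_shift[of f a] by (rule Gcount_le_card)
  then show ?thesis
    by simp
qed

section \<open>Noiseless random batch CBO\<close>

locale noiseless_cbo =
  fixes w :: "'n::finite set \<Rightarrow> 'n \<Rightarrow> ('n \<Rightarrow> real^'d::finite) \<Rightarrow> real"
    and \<gamma> :: real and Bs :: "nat \<Rightarrow> 'n set set" and X0 :: "'n \<Rightarrow> real^'d"
  assumes gamma_pos: "0 < \<gamma>" and gamma_less_1: "\<gamma> < 1"
    and w_nonneg: "\<And>S j X. S \<noteq> {} \<Longrightarrow> 0 \<le> w S j X"
    and w_sum: "\<And>S X. S \<noteq> {} \<Longrightarrow> (\<Sum>j\<in>S. w S j X) = 1"
    and w_out: "\<And>S j X. S \<noteq> {} \<Longrightarrow> j \<notin> S \<Longrightarrow> w S j X = 0"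
    and partition_Bs: "\<And>r. partition_on UNIV (Bs r)"
begin

abbreviation traj :: "nat \<Rightarrow> 'n \<Rightarrow> real^'d" where
  "traj \<equiv> cbo_traj w \<gamma> Bs (\<lambda>_ _ _. 0) X0"

definition weight :: "nat \<Rightarrow> 'n \<Rightarrow> 'n \<Rightarrow> real" where
  "weight t i j = w (batch_of (Bs t) i) j (traj t)"

lemma batch_nonempty: "batch_of (Bs t) i \<noteq> {}"
  using mem_batch_of[OF partition_Bs] by blast

lemma weight_sum: "(\<Sum>j\<in>UNIV. weight t i j) = 1"
proof -
  have "(\<Sum>j\<in>UNIV. weight t i j) = (\<Sum>j\<in>batch_of (Bs t) i. weight t i j)"
    by (rule sum.mono_neutral_right) (auto simp: weight_def w_out[OF batch_nonempty])
  then show ?thesis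
    by (simp add: weight_def w_sum[OF batch_nonempty])
qed

lemma averaging_dynamics_traj: "averaging_dynamics (\<lambda>t i. traj (a + t) i $ l) (\<lambda>t. weight (a + t)) \<gamma>"
proof
  show "traj (a + Suc t) i $ l
      = (1 - \<gamma>) * traj (a + t) i $ l + \<gamma> * (\<Sum>j\<in>UNIV. weight (a + t) i j * traj (a + t) j $ l)" for t i
    by (simp add: weight_def cbo_step_def wmean_def sum_component algebra_simps)
qed (use gamma_pos gamma_less_1 weight_sum in \<open>auto simp: weight_def intro!: w_nonneg batch_nonempty\<close>)

lemma diamD_traj_window:
  "diamD (traj (a + m)) l \<le> diamD (traj a) l * (1 - \<gamma> * (1 - \<gamma>) ^ (m - 1) * Gcount Bs a m)"
proof -
  interpret averaging_dynamics "\<lambda>t i. traj (a + t) i $ l" "\<lambda>t. weight (a + t)" \<gamma>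
    by (rule averaging_dynamics_traj)
  let ?c = "\<gamma> * (1 - \<gamma>) ^ (m - 1)"
  obtain i j where i: "traj (a + m) i $ l = (MIN k. traj (a + m) k $ l)"
    and j: "traj (a + m) j $ l = (MAX k. traj (a + m) k $ l)"
    by (rule diamD_attained)
  have "Gcount Bs a m \<le> card {r. r < m \<and> batch_of (Bs (a + r)) i = batch_of (Bs (a + r)) j}"
    unfolding Gcount_shift[of Bs a] by (rule Gcount_le_card)
  also have "\<dots> \<le> card {r. r < m \<and> weight (a + r) i = weight (a + r) j}"
    by (intro card_mono) (auto simp: weight_def)
  finally have "?c * Gcount Bs a m \<le> ?c * card {r. r < m \<and> weight (a + r) i = weight (a + r) j}"
    using gamma_pos gamma_less_1 by (intro mult_left_mono) auto
  moreover have "traj (a + m) j $ l - traj (a + m) i $ l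
      \<le> diamD (traj a) l * (1 - ?c * card {r. r < m \<and> weight (a + r) i = weight (a + r) j})"
    unfolding diamD_def by (rule spread_contraction) simp_all
  ultimately show ?thesis
    unfolding diamD_def[of "traj (a + m)"] i[symmetric] j[symmetric]
    using diamD_nonneg[of "traj a" l] by (smt (verit) mult_left_mono)
qed

lemma diamD_traj_antimono: "diamD (traj (a + m)) l \<le> diamD (traj a) l"
proof -
  have "0 \<le> diamD (traj a) l * (\<gamma> * (1 - \<gamma>) ^ (m - 1) * Gcount Bs a m)"
    using gamma_pos gamma_less_1 diamD_nonneg by (intro mult_nonneg_nonneg) simp_all
  then show ?thesis
    using diamD_traj_window[of a m l] by (simp add: right_diff_distrib)
qed

lemma diamD_traj_window_exp:
  "diamD (traj (a + m)) l \<le> diamD (traj a) l * exp (- (\<gamma> * (1 - \<gamma>) ^ (m - 1) * Gcount Bs a m))"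
proof -
  have "diamD (traj (a + m)) l \<le> diamD (traj a) l * (1 - \<gamma> * (1 - \<gamma>) ^ (m - 1) * Gcount Bs a m)"
    by (rule diamD_traj_window)
  also have "\<dots> \<le> diamD (traj a) l * exp (- (\<gamma> * (1 - \<gamma>) ^ (m - 1) * Gcount Bs a m))"
    using diamD_nonneg exp_ge_add_one_self[of "- (\<gamma> * (1 - \<gamma>) ^ (m - 1) * Gcount Bs a m)"]
    by (intro mult_left_mono) auto
  finally show ?thesis .
qed

lemma diamD_traj_blocks: "diamD (traj (k * m0)) l \<le> diamD X0 l * exp (- Lambda0 \<gamma> Bs m0 k * real k)"
proof -
  let ?c = "\<gamma> * (1 - \<gamma>) ^ (m0 - 1)"
  have "diamD (traj (k * m0)) l \<le> diamD X0 l * exp (- (?c * (\<Sum>s=1..k. real (Gcount Bs ((s - 1) * m0) m0))))"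
  proof (induction k)
    case (Suc k)
    have "diamD (traj (Suc k * m0)) l = diamD (traj (k * m0 + m0)) l"
      by (simp add: add.commute)
    also have "\<dots> \<le> diamD (traj (k * m0)) l * exp (- (?c * Gcount Bs (k * m0) m0))"
      by (rule diamD_traj_window_exp)
    also have "\<dots> \<le> diamD X0 l * exp (- (?c * (\<Sum>s=1..k. real (Gcount Bs ((s - 1) * m0) m0))))
        * exp (- (?c * Gcount Bs (k * m0) m0))"
      using Suc by (intro mult_right_mono) auto
    also have "\<dots> = diamD X0 l * exp (- (?c * (\<Sum>s=1..Suc k. real (Gcount Bs ((s - 1) * m0) m0))))"
      by (simp add: algebra_simps exp_add[symmetric])
    finally show ?case .
  qed simp
  then show ?thesis
    by (simp add: Lambda0_def)
qed

lemma diamD_traj_le: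
  assumes "k * m0 \<le> n"
  shows "diamD (traj n) l \<le> diamD X0 l * exp (- Lambda0 \<gamma> Bs m0 k * real k)"
  using diamD_traj_antimono[of "k * m0" "n - k * m0" l] diamD_traj_blocks[of k m0 l] assms
  by simp

lemma diam_inf_traj_le:
  assumes "k * m0 \<le> n"
  shows "diam_inf (traj n) \<le> diam_inf X0 * exp (- Lambda0 \<gamma> Bs m0 k * real k)"
  using diamD_traj_le[OF assms] by (rule diam_inf_le_mult) simp

end

section \<open>A strong law of large numbers for bounded variables\<close>

lemma (in prob_space) Hoeffding_mean_deviation:
  assumes indep: "indep_vars (\<lambda>_. borel) X UNIV"
    and bounded: "\<And>s x. 0 \<le> X s x \<and> X s x \<le> c" and "0 < c"
    and mean: "\<And>s. expectation (X s) = \<mu>"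
    and "0 < \<epsilon>" and "0 < n"
  shows "prob {x\<in>space M. \<epsilon> \<le> \<bar>(\<Sum>s<n. X s x) / n - \<mu>\<bar>} \<le> 2 * exp (-2 * \<epsilon>\<^sup>2 / c\<^sup>2) ^ n"
proof -
  interpret Hoeffding_ineq M "{..<n}" X "\<lambda>_. 0" "\<lambda>_. c" "n * \<mu>"
  proof unfold_locales
    show "indep_vars (\<lambda>_. borel) X {..<n}"
      using indep_vars_subset[OF indep] by auto
  qed (use bounded mean in auto)
  have "\<epsilon> \<le> \<bar>S / n - \<mu>\<bar> \<longleftrightarrow> n * \<epsilon> \<le> \<bar>S - n * \<mu>\<bar>" for S :: real
  proof -
    have "S / n - \<mu> = (S - n * \<mu>) / n"
      using \<open>0 < n\<close> by (simp add: diff_divide_distrib)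
    then show ?thesis
      using \<open>0 < n\<close> by (simp add: pos_le_divide_eq mult.commute)
  qed
  then have "{x\<in>space M. \<epsilon> \<le> \<bar>(\<Sum>s<n. X s x) / n - \<mu>\<bar>} = {x\<in>space M. n * \<epsilon> \<le> \<bar>(\<Sum>s<n. X s x) - n * \<mu>\<bar>}"
    by simp
  also have "prob \<dots> \<le> 2 * exp (-2 * (n * \<epsilon>)\<^sup>2 / (\<Sum>i<n. (c - 0)\<^sup>2))"
    using \<open>0 < \<epsilon>\<close> \<open>0 < c\<close> \<open>0 < n\<close> by (intro Hoeffding_ineq_abs_ge) auto
  also have "-2 * (n * \<epsilon>)\<^sup>2 / (\<Sum>i<n. (c - 0)\<^sup>2) = n * (-2 * \<epsilon>\<^sup>2 / c\<^sup>2)"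
    using \<open>0 < c\<close> \<open>0 < n\<close> by (simp add: power2_eq_square field_simps)
  finally show ?thesis
    by (simp only: exp_of_nat_mult)
qed

text \<open>Hoeffding's bounds are summable, so by Borel-Cantelli each deviation 1 / (j + 1)
  occurs only finitely often.\<close>
lemma (in prob_space) strong_law_bounded:
  assumes indep: "indep_vars (\<lambda>_. borel) X UNIV"
    and bounded: "\<And>s x. 0 \<le> X s x \<and> X s x \<le> c" and "0 < c"
    and mean: "\<And>s. expectation (X s) = \<mu>"
  shows "AE x in M. (\<lambda>k. (\<Sum>s<k. X s x) / k) \<longlonglongrightarrow> \<mu>"
proof -
  have [measurable]: "X s \<in> borel_measurable M" for s
    using indep by (auto simp: indep_vars_def)
  define dev where "dev \<epsilon> n = {x\<in>space M. \<epsilon> \<le> \<bar>(\<Sum>s<Suc n. X s x) / Suc n - \<mu>\<bar>}" for \<epsilon> n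
  have finitely_many_deviations: "AE x in M. eventually (\<lambda>n. x \<in> space M - dev \<epsilon> n) sequentially"
    if "0 < \<epsilon>" for \<epsilon>
  proof (rule borel_cantelli_AE1)
    show "dev \<epsilon> n \<in> sets M" for n
      unfolding dev_def by measurable
    show "emeasure M (dev \<epsilon> n) < \<infinity>" for n
      by (simp add: emeasure_eq_measure)
    let ?q = "exp (-2 * \<epsilon>\<^sup>2 / c\<^sup>2)"
    have "summable (\<lambda>n. 2 * ?q ^ Suc n)"
      using \<open>0 < \<epsilon>\<close> \<open>0 < c\<close> by (intro summable_mult summable_ignore_initial_segment[of _ 1, simplified])
        (simp add: summable_geometric)
    moreover have "norm (prob (dev \<epsilon> n)) \<le> 2 * ?q ^ Suc n" for n
      unfolding dev_def using Hoeffding_mean_deviation[OF indep bounded \<open>0 < c\<close> mean \<open>0 < \<epsilon>\<close>, of "Suc n"]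
      by simp
    ultimately show "summable (\<lambda>n. prob (dev \<epsilon> n))"
      by (rule summable_comparison_test')
  qed
  have "AE x in M. \<forall>j::nat. eventually (\<lambda>n. x \<in> space M - dev (1 / Suc j) n) sequentially"
    using finitely_many_deviations by (subst AE_all_countable) auto
  then show ?thesis
  proof (rule AE_mp[OF _ AE_I2[OF impI]])
    fix x assume x: "x \<in> space M"
      and close: "\<forall>j::nat. eventually (\<lambda>n. x \<in> space M - dev (1 / Suc j) n) sequentially"
    have "(\<lambda>n. (\<Sum>s<Suc n. X s x) / Suc n) \<longlonglongrightarrow> \<mu>"
    proof (rule tendstoI)
      fix e :: real assume "0 < e"
      then obtain j :: nat where "1 / Suc j < e"
        by (rule nat_approx_posE)
      with close[rule_format, of j] x
      show "eventually (\<lambda>n. dist ((\<Sum>s<Suc n. X s x) / Suc n) \<mu> < e) sequentially"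
        by (auto simp: dev_def dist_real_def elim!: eventually_mono)
    qed
    then show "(\<lambda>k. (\<Sum>s<k. X s x) / k) \<longlonglongrightarrow> \<mu>"
      by (rule filterlim_sequentially_Suc[THEN iffD1])
  qed
qed

section \<open>Random batches\<close>

lemma Lambda0_eq_average:
  "Lambda0 \<gamma> Bs m0 k = \<gamma> * (1 - \<gamma>) ^ (m0 - 1) * ((\<Sum>s<k. real (Gcount Bs (s * m0) m0)) / k)"
  by (simp add: Lambda0_def sum.atLeast1_atMost_eq)

locale uniform_batches = prob_space M for M :: "'w measure" +
  fixes B :: "nat \<Rightarrow> 'w \<Rightarrow> 'n::finite set set" and P m0 :: nat
  assumes B_meas: "\<And>n. B n \<in> measurable M (count_space UNIV)"
    and B_range: "\<And>n x. x \<in> space M \<Longrightarrow> B n x \<in> batch_partitions P"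
    and B_unif: "\<And>n Q. Q \<in> batch_partitions P \<Longrightarrow>
        measure M {x\<in>space M. B n x = Q} = 1 / real (card (batch_partitions P :: 'n set set set))"
    and B_indep: "indep_vars (\<lambda>_. count_space UNIV) B UNIV"
    and m0_pos: "0 < m0"
begin

abbreviation partitions :: "'n set set set" where
  "partitions \<equiv> batch_partitions P"

abbreviation windows :: "(nat \<Rightarrow> 'n set set) set" where
  "windows \<equiv> PiE {..<m0} (\<lambda>_. partitions)"

definition window :: "nat \<Rightarrow> 'w \<Rightarrow> nat \<Rightarrow> 'n set set" where
  "window a x = (\<lambda>t\<in>{..<m0}. B (a + t) x)"

text \<open>The mean \<open>p\<^sub>m\<^sub>0\<close> of the paper, computed from the uniform distribution of a window.\<close>
definition mean_meetings :: real where
  "mean_meetings = (\<Sum>q\<in>windows. real (Gcount q 0 m0)) / real (card partitions) ^ m0"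

lemma finite_partitions: "finite partitions"
  by (rule finite_subset[of _ UNIV]) auto

lemma Gcount_window: "Gcount (\<lambda>r. B r x) a m0 = Gcount (window a x) 0 m0"
  unfolding Gcount_shift[of _ a] window_def by (rule Gcount_cong) simp

lemma prob_window_eq:
  assumes "q \<in> windows"
  shows "prob {x\<in>space M. window a x = q} = (1 / real (card partitions)) ^ m0"
proof -
  let ?J = "(+) a ` {..<m0}"
  have "{x\<in>space M. window a x = q} = (\<Inter>i\<in>?J. B i -` {q (i - a)} \<inter> space M)"
    using assms m0_pos by (auto simp: window_def fun_eq_iff PiE_def extensional_def)
  moreover have "prob (\<Inter>i\<in>?J. B i -` {q (i - a)} \<inter> space M) = (\<Prod>i\<in>?J. prob (B i -` {q (i - a)} \<inter> space M))"
    by (rule indep_varsD[OF B_indep]) (use m0_pos in auto)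
  ultimately have "prob {x\<in>space M. window a x = q} = (\<Prod>i\<in>?J. prob (B i -` {q (i - a)} \<inter> space M))"
    by simp
  also have "\<dots> = (\<Prod>i\<in>?J. 1 / real (card partitions))"
  proof (rule prod.cong[OF refl])
    fix i assume "i \<in> ?J"
    then have "q (i - a) \<in> partitions"
      using assms by auto
    moreover have "B i -` {q (i - a)} \<inter> space M = {x\<in>space M. B i x = q (i - a)}"
      by auto
    ultimately show "prob (B i -` {q (i - a)} \<inter> space M) = 1 / real (card partitions)"
      using B_unif by simp
  qed
  also have "\<dots> = (1 / real (card partitions)) ^ m0"
    by (simp add: card_image)
  finally show ?thesis .
qed

lemma expectation_Gcount: "expectation (\<lambda>x. real (Gcount (\<lambda>r. B r x) a m0)) = mean_meetings"
proof -
  let ?G = "\<lambda>q. real (Gcount q 0 m0)"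
  define S where "S q = {x\<in>space M. window a x = q}" for q
  have S_sets: "S q \<in> sets M" for q
  proof -
    have "S q = {x\<in>space M. \<forall>t<m0. B (a + t) x = q t}" if "q \<in> windows"
      using that by (auto simp: S_def window_def fun_eq_iff PiE_def extensional_def)
    moreover have "S q = {}" if "q \<notin> windows"
      using that B_range by (auto simp: S_def window_def)
    ultimately show ?thesis
      using B_meas by (cases "q \<in> windows") (auto intro!: sets.sets_Collect_finite_All)
  qed
  have "expectation (\<lambda>x. real (Gcount (\<lambda>r. B r x) a m0)) = expectation (\<lambda>x. \<Sum>q\<in>windows. ?G q * indicator (S q) x)"
  proof (rule Bochner_Integration.integral_cong[OF refl])
    fix x assume x: "x \<in> space M"
    then have "window a x \<in> windows"
      using B_range by (auto simp: window_def)
    then show "real (Gcount (\<lambda>r. B r x) a m0) = (\<Sum>q\<in>windows. ?G q * indicator (S q) x)"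
      using x finite_partitions
      by (simp add: Gcount_window S_def indicator_def finite_PiE if_distrib cong: if_cong)
  qed
  also have "\<dots> = (\<Sum>q\<in>windows. ?G q * prob (S q))"
    using S_sets finite_partitions
    by (subst Bochner_Integration.integral_sum)
      (auto simp: finite_PiE emeasure_eq_measure intro!: integrable_mult_right integrable_real_indicator)
  also have "\<dots> = (\<Sum>q\<in>windows. ?G q * (1 / real (card partitions)) ^ m0)"
    by (intro sum.cong refl) (simp add: S_def prob_window_eq)
  finally show ?thesis
    by (simp add: mean_meetings_def sum_divide_distrib power_divide)
qed

lemma mean_meetings_pos:
  assumes "covering P m0 TYPE('n)"
  shows "0 < mean_meetings"
proof -
  obtain Ps :: "nat \<Rightarrow> 'n set set" where Ps: "\<And>k. k \<in> {1..m0} \<Longrightarrow> Ps k \<in> partitions"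
    and meet: "\<And>i j. \<exists>k\<in>{1..m0}. \<exists>S\<in>Ps k. i \<in> S \<and> j \<in> S"
    using assms unfolding covering_def by blast
  define q where "q = (\<lambda>t\<in>{..<m0}. Ps (Suc t))"
  have q_window: "q \<in> windows"
    using Ps by (auto simp: q_def)
  have "0 < card {r. 0 \<le> r \<and> r < 0 + m0 \<and> batch_of (q r) i = batch_of (q r) j}" for i j
  proof -
    obtain k S where "k \<in> {1..m0}" "S \<in> Ps k" "i \<in> S" "j \<in> S"
      using meet by blast
    then have "k - 1 \<in> {r. 0 \<le> r \<and> r < 0 + m0 \<and> batch_of (q r) i = batch_of (q r) j}"
      using batch_of_eqI[OF partition_on_batch_partitions[OF Ps]] by (auto simp: q_def)
    then show ?thesis
      by (auto simp: card_gt_0_iff)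
  qed
  then have "1 \<le> Gcount q 0 m0"
    unfolding Gcount_def by (intro Min.boundedI) (auto simp: Suc_le_eq)
  also have "\<dots> \<le> (\<Sum>q\<in>windows. real (Gcount q 0 m0))"
    using q_window finite_partitions by (intro member_le_sum) (auto simp: finite_PiE)
  finally have "0 < (\<Sum>q\<in>windows. real (Gcount q 0 m0))"
    by simp
  moreover have "0 < card partitions"
    using Ps[of 1] m0_pos finite_partitions card_gt_0_iff by fastforce
  ultimately show ?thesis
    by (simp add: mean_meetings_def)
qed

lemma indep_Gcount_blocks: "indep_vars (\<lambda>_. borel) (\<lambda>s x. real (Gcount (\<lambda>r. B r x) (s * m0) m0)) UNIV"
proof -
  define K where "K s = {s * m0..<s * m0 + m0}" for s
  have block_index: "r div m0 = s" if "r \<in> K s" for r s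
    using that unfolding K_def by (intro div_nat_eqI) (simp_all add: mult.commute)
  have "disjoint_family K"
    unfolding disjoint_family_on_def by (metis block_index disjoint_iff)
  then have "indep_vars (\<lambda>s. PiM (K s) (\<lambda>_. count_space UNIV)) (\<lambda>s x. restrict (\<lambda>r. B r x) (K s)) UNIV"
    by (intro indep_vars_restrict[OF B_indep]) auto
  then have "indep_vars (\<lambda>_. borel) (\<lambda>s x. real (Gcount (restrict (\<lambda>r. B r x) (K s)) (s * m0) m0)) UNIV"
    by (rule indep_vars_compose2) (subst count_space_PiM_finite, auto simp: K_def intro: countable_finite)
  moreover have "Gcount (restrict (\<lambda>r. B r x) (K s)) (s * m0) m0 = Gcount (\<lambda>r. B r x) (s * m0) m0" for s x
    unfolding Gcount_shift[of _ "s * m0"] by (rule Gcount_cong) (simp add: K_def)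
  ultimately show ?thesis
    by simp
qed

lemma Lambda0_limit:
  "AE x in M. (\<lambda>k. Lambda0 \<gamma> (\<lambda>r. B r x) m0 k) \<longlonglongrightarrow> mean_meetings * \<gamma> * (1 - \<gamma>) ^ (m0 - 1)"
proof -
  have "AE x in M. (\<lambda>k. (\<Sum>s<k. real (Gcount (\<lambda>r. B r x) (s * m0) m0)) / k) \<longlonglongrightarrow> mean_meetings"
    using Gcount_le m0_pos
    by (intro strong_law_bounded[OF indep_Gcount_blocks, where c = m0]) (auto simp: expectation_Gcount)
  then show ?thesis
  proof eventually_elim
    case (elim x)
    then show ?case
      unfolding Lambda0_eq_average using tendsto_mult_left[OF elim, of "\<gamma> * (1 - \<gamma>) ^ (m0 - 1)"]
      by (simp add: mult_ac)
  qed
qed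

end

theorem theorem3p1:
  fixes M :: "'w measure"
    and P m0 :: nat
    and \<gamma> \<zeta> :: real
    and w :: "'n::finite set \<Rightarrow> 'n \<Rightarrow> ('n \<Rightarrow> real^'d::finite) \<Rightarrow> real"
    and B :: "nat \<Rightarrow> 'w \<Rightarrow> 'n set set"
    and \<eta> :: "nat \<Rightarrow> 'n \<Rightarrow> 'd \<Rightarrow> 'w \<Rightarrow> real"
    and X0 :: "'w \<Rightarrow> ('n \<Rightarrow> real^'d)"
  assumes "prob_space M"
    and "CARD('n) \<ge> 2" and "P \<ge> 2"
    and "0 < \<gamma>" and "\<gamma> < 1" and "\<zeta> \<ge> 0"
    and w_nonneg: "\<And>S j X. S \<noteq> {} \<Longrightarrow> w S j X \<ge> 0"
    and w_sum: "\<And>S X. S \<noteq> {} \<Longrightarrow> (\<Sum>j\<in>S. w S j X) = 1"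
    and w_out: "\<And>S j X. S \<noteq> {} \<Longrightarrow> j \<notin> S \<Longrightarrow> w S j X = 0"
    and B_meas: "\<And>n. B n \<in> measurable M (count_space UNIV)"
    and B_range: "\<And>n x. x \<in> space M \<Longrightarrow> B n x \<in> batch_partitions P"
    and B_unif: "\<And>n Q. Q \<in> batch_partitions P \<Longrightarrow>
        measure M {x\<in>space M. B n x = Q} = 1 / real (card (batch_partitions P :: 'n set set set))"
    and B_indep: "prob_space.indep_vars M (\<lambda>_. count_space UNIV) B UNIV"
    and eta_meas: "\<And>n i l. \<eta> n i l \<in> borel_measurable M"
    and eta_int: "\<And>n i l. integrable M (\<eta> n i l)"
    and eta_mean: "\<And>n i l. (\<integral>x. \<eta> n i l x \<partial>M) = 0"
    and eta_var: "\<And>n i l. integrable M (\<lambda>x. (\<eta> n i l x)\<^sup>2) \<and> (\<integral>x. (\<eta> n i l x)\<^sup>2 \<partial>M) \<le> \<zeta>\<^sup>2"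
    and eta_zero: "\<And>n i l. AE x in M. \<eta> n i l x = 0"
    and "m0 > 0"
    and cover: "covering P m0 TYPE('n)"
  shows "(\<integral>x. real (Gcount (\<lambda>r. B r x) 0 m0) \<partial>M) > 0
    \<and> (\<forall>k n l. k * m0 \<le> n \<and> n < (k + 1) * m0 \<longrightarrow>
        (AE x in M.
          diamD (cbo_traj w \<gamma> (\<lambda>r. B r x) (\<lambda>r i l. \<eta> r i l x) (X0 x) n) l
            \<le> diamD (X0 x) l * exp (- Lambda0 \<gamma> (\<lambda>r. B r x) m0 k * real k)))
    \<and> (\<forall>k n. k * m0 \<le> n \<and> n < (k + 1) * m0 \<longrightarrow>
        (AE x in M.
          diam_inf (cbo_traj w \<gamma> (\<lambda>r. B r x) (\<lambda>r i l. \<eta> r i l x) (X0 x) n)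
            \<le> diam_inf (X0 x) * exp (- Lambda0 \<gamma> (\<lambda>r. B r x) m0 k * real k)))
    \<and> (AE x in M. (\<lambda>k. Lambda0 \<gamma> (\<lambda>r. B r x) m0 k) \<longlonglongrightarrow>
        (\<integral>x. real (Gcount (\<lambda>r. B r x) 0 m0) \<partial>M) * \<gamma> * (1 - \<gamma>) ^ (m0 - 1))"
proof -
  interpret prob_space M
    by fact
  interpret uniform_batches M B P m0
    using B_meas B_range B_unif B_indep \<open>0 < m0\<close> by unfold_locales auto
  have mean: "(\<integral>x. real (Gcount (\<lambda>r. B r x) 0 m0) \<partial>M) = mean_meetings"
    by (rule expectation_Gcount)
  have noiseless: "AE x in M. (\<lambda>r i l. \<eta> r i l x) = (\<lambda>_ _ _. 0)"
    using eta_zero by (simp add: AE_all_countable fun_eq_iff)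
  have cbo: "noiseless_cbo w \<gamma> (\<lambda>r. B r x)" if "x \<in> space M" for x
    using \<open>0 < \<gamma>\<close> \<open>\<gamma> < 1\<close> w_nonneg w_sum w_out partition_on_batch_partitions[OF B_range[OF that]]
    by unfold_locales auto
  have "AE x in M. diamD (cbo_traj w \<gamma> (\<lambda>r. B r x) (\<lambda>r i l. \<eta> r i l x) (X0 x) n) l
      \<le> diamD (X0 x) l * exp (- Lambda0 \<gamma> (\<lambda>r. B r x) m0 k * real k)" if "k * m0 \<le> n" for k n l
    using noiseless AE_space by eventually_elim (metis noiseless_cbo.diamD_traj_le[OF cbo] that)
  moreover have "AE x in M. diam_inf (cbo_traj w \<gamma> (\<lambda>r. B r x) (\<lambda>r i l. \<eta> r i l x) (X0 x) n)
      \<le> diam_inf (X0 x) * exp (- Lambda0 \<gamma> (\<lambda>r. B r x) m0 k * real k)" if "k * m0 \<le> n" for k n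
    using noiseless AE_space by eventually_elim (metis noiseless_cbo.diam_inf_traj_le[OF cbo] that)
  ultimately show ?thesis
    unfolding mean using mean_meetings_pos[OF cover] Lambda0_limit by blast
qed

end
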